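(* For every nonnegative integer $L$, \[ G(L+1,L;1/2,2,2)=\sum_{j\in\mathbb{Z}}(-1)^j q^{\frac{1}{2}j(5j+3)}\begin{bmatrix}2L+1\\ L-2j\end{bmatrix} =\sum_{n\geq 0}q^{n(n+1)}\begin{bmatrix}L\\ n\end{bmatrix}. \]
   Context: $(x;q)_n=\prod_{i=0}^{n-1}(1-xq^i)$, $(q)_n=(q;q)_n$. The $q$-binomial coefficient is $\begin{bmatrix}n\\ m\end{bmatrix}=\frac{(q)_n}{(q)_m(q)_{n-m}}$ if $m$ and $n-m$ are nonnegative integers and $0$ otherwise. For integers $N,M$, a positive integer $K$ and rationals $\alpha,\beta$, $G(N,M;\alpha,\beta,K)=\sum_{j\in\mathbb{Z}}(-1)^jq^{\frac12 Kj((\alpha+\beta)j+\alpha-\beta)}\begin{bmatrix}M+N\\ N-Kj\end{bmatrix}$. *)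

theory Defs
  imports Complex_Main
begin

definition qpoch :: "real \<Rightarrow> real \<Rightarrow> nat \<Rightarrow> real" where
  "qpoch x q n = (\<Prod>i<n. 1 - x * q ^ i)"

definition qfac :: "real \<Rightarrow> nat \<Rightarrow> real" where
  "qfac q n = qpoch q q n"

definition qbinom :: "real \<Rightarrow> int \<Rightarrow> int \<Rightarrow> real" where
  "qbinom q n m =
     (if 0 \<le> m \<and> 0 \<le> n - m
      then qfac q (nat n) / (qfac q (nat m) * qfac q (nat (n - m)))
      else 0)"

text \<open>G(N,M;alpha,beta,K). The sum over all integers j is written as a finite sum over
  the j for which the q-binomial can be nonzero (all other terms vanish).\<close>
definition G :: "real \<Rightarrow> int \<Rightarrow> int \<Rightarrow> rat \<Rightarrow> rat \<Rightarrow> nat \<Rightarrow> real" where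
  "G q N M \<alpha> \<beta> K =
     (\<Sum>j \<in> {j::int. 0 \<le> N - int K * j \<and> N - int K * j \<le> M + N}.
        (-1) powi j *
        q powr (1/2 * real K * real_of_int j *
                 ((real_of_rat \<alpha> + real_of_rat \<beta>) * real_of_int j
                  + real_of_rat \<alpha> - real_of_rat \<beta>)) *
        qbinom q (M + N) (N - int K * j))"

end

theory Submission
  imports Defs
begin

(*
  Write B_b(N,M) = sum_j (-1)^j q^(j(5j+b)/2) [M+N; N-2j] and F_a(L) = sum_n q^(n^2+an) [L;n];
  then G(L+1,L;1/2,2,2) = B_(-3)(L+1,L), the middle sum is B_3(L,L+1) and the right-hand side
  is F_1(L). The two q-Pascal rules give
    B_b(N,M) = B_b(N,M-1) + q^M B_(b+4)(N-1,M) = B_b(N-1,M) + q^N B_(b-4)(N,M-1),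
  and the substitutions j -> -j and j -> -1-j give B_b(N,M) = B_(-b)(M,N) and
  B_b(N,M) = -q^((5-b)/2) B_(10-b)(M-2,N+2), so that B_5(N,N+2) = 0. With these,
  (x_L, y_L) = (B_1(L,L), B_3(L,L+1)) satisfies
    x_(L+1) = x_L + q^(L+1) y_L,   y_(L+1) = y_L + q^(L+1) (x_(L+1) - y_L),
  and q-Pascal on the fermionic side shows that (F_0(L), F_1(L)) satisfies the same recurrence;
  both pairs start at (1,1).
*)

lemma qfac_0 [simp]: "qfac q 0 = 1"
  by (simp add: qfac_def qpoch_def)

lemma qfac_Suc: "qfac q (Suc n) = qfac q n * (1 - q ^ Suc n)"
  by (simp add: qfac_def qpoch_def)

lemma qfac_pos:
  assumes "0 < q" "q < 1"
  shows "qfac q n > 0"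
proof (induction n)
  case (Suc n)
  have "q ^ Suc n < 1"
    using assms by (rule power_Suc_less_one)
  with Suc show ?case
    by (simp add: qfac_Suc)
qed simp

lemma qbinom_eq_0: "k < 0 \<or> n < k \<Longrightarrow> qbinom q n k = 0"
  by (auto simp: qbinom_def)

lemma qbinom_sym: "qbinom q n k = qbinom q n (n - k)"
  by (auto simp: qbinom_def mult.commute)

lemma qbinom_of_nat: "qbinom q (int (a + b)) (int a) = qfac q (a + b) / (qfac q a * qfac q b)"
  by (simp add: qbinom_def nat_int_add)

definition bosonic_support :: "int \<Rightarrow> int \<Rightarrow> int set" where
  "bosonic_support N M = {j. 0 \<le> N - 2 * j \<and> N - 2 * j \<le> M + N}"

definition bosonic_term :: "real \<Rightarrow> int \<Rightarrow> int \<Rightarrow> int \<Rightarrow> int \<Rightarrow> real" where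
  "bosonic_term q b N M j =
     (-1) powi j * q powr (real_of_int (j * (5 * j + b)) / 2) * qbinom q (M + N) (N - 2 * j)"

definition bosonic :: "real \<Rightarrow> int \<Rightarrow> int \<Rightarrow> int \<Rightarrow> real" where
  "bosonic q b N M = (\<Sum>j\<in>bosonic_support N M. bosonic_term q b N M j)"

lemma G_eq_bosonic: "G q N M (of_int (5 + b) / 4) (of_int (5 - b) / 4) 2 = bosonic q b N M"
proof -
  have params: "real_of_rat (of_int (5 + b) / 4) = (5 + real_of_int b) / 4"
    "real_of_rat (of_int (5 - b) / 4) = (5 - real_of_int b) / 4"
    by (simp_all add: of_rat_divide of_rat_add of_rat_diff)
  have exponent: "1 / 2 * real 2 * real_of_int j
      * (((5 + real_of_int b) / 4 + (5 - real_of_int b) / 4) * real_of_int j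
         + (5 + real_of_int b) / 4 - (5 - real_of_int b) / 4)
      = real_of_int (j * (5 * j + b)) / 2" for j
    by (simp add: field_simps)
  show ?thesis
    unfolding G_def bosonic_def bosonic_support_def bosonic_term_def params exponent
    by simp
qed

lemma finite_bosonic_support: "finite (bosonic_support N M)"
proof (rule finite_subset)
  show "bosonic_support N M \<subseteq> {-\<bar>M\<bar>..\<bar>N\<bar>}"
    by (auto simp: bosonic_support_def)
qed simp

lemma bosonic_support_mono:
  "bosonic_support N (M - 1) \<subseteq> bosonic_support N M"
  "bosonic_support (N - 1) M \<subseteq> bosonic_support N M"
  by (auto simp: bosonic_support_def)

lemma bosonic_term_eq_0:
  assumes "j \<notin> bosonic_support N M"
  shows "bosonic_term q b N M j = 0"
proof -
  from assms have "N - 2 * j < 0 \<or> M + N < N - 2 * j"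
    by (auto simp: bosonic_support_def)
  then show ?thesis
    by (simp add: bosonic_term_def qbinom_eq_0)
qed

lemma bosonic_eq_sum_superset:
  assumes "bosonic_support N M \<subseteq> A" "finite A"
  shows "bosonic q b N M = (\<Sum>j\<in>A. bosonic_term q b N M j)"
  unfolding bosonic_def using assms
  by (intro sum.mono_neutral_left) (auto simp: bosonic_term_eq_0)

lemma bosonic_reindex:
  assumes "\<And>j. c - j \<in> bosonic_support N M \<longleftrightarrow> j \<in> bosonic_support N' M'"
    and "\<And>j. bosonic_term q b N M (c - j) = K * bosonic_term q b' N' M' j"
  shows "bosonic q b N M = K * bosonic q b' N' M'"
proof -
  have "bosonic q b N M = (\<Sum>j\<in>bosonic_support N' M'. K * bosonic_term q b' N' M' j)"
    unfolding bosonic_def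
  proof (rule sum.reindex_bij_witness[of _ "\<lambda>j. c - j" "\<lambda>j. c - j"])
    show "c - j \<in> bosonic_support N M" if "j \<in> bosonic_support N' M'" for j
      using that assms(1) by blast
    show "c - j \<in> bosonic_support N' M'" if "j \<in> bosonic_support N M" for j
      using that assms(1)[of "c - j"] by simp
    show "K * bosonic_term q b' N' M' (c - j) = bosonic_term q b N M j" for j
      using assms(2)[of "c - j"] by simp
  qed simp_all
  then show ?thesis
    by (simp add: bosonic_def sum_distrib_left)
qed

lemma bosonic_swap: "bosonic q b N M = bosonic q (- b) M N"
proof -
  have "bosonic q b N M = 1 * bosonic q (- b) M N"
  proof (rule bosonic_reindex[where c = 0])
    fix j
    have "qbinom q (M + N) (N - 2 * (0 - j)) = qbinom q (N + M) (M - 2 * j)"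
      by (subst qbinom_sym) (simp add: algebra_simps)
    then show "bosonic_term q b N M (0 - j) = 1 * bosonic_term q (- b) M N j"
      by (simp add: bosonic_term_def power_int_minus_one_minus algebra_simps)
  qed (auto simp: bosonic_support_def)
  then show ?thesis
    by simp
qed

lemma bosonic_shift:
  "bosonic q b N M = - (q powr (real_of_int (5 - b) / 2)) * bosonic q (10 - b) (M - 2) (N + 2)"
proof (rule bosonic_reindex[where c = "-1"])
  fix j
  have sign: "(-1 :: real) powi (-1 - j) = - ((-1) powi j)"
    by (simp add: power_int_minus_left)
  have "(-1 - j) * (5 * (-1 - j) + b) = (5 - b) + j * (5 * j + (10 - b))"
    by (simp add: algebra_simps)
  then have "real_of_int ((-1 - j) * (5 * (-1 - j) + b)) / 2
      = real_of_int (5 - b) / 2 + real_of_int (j * (5 * j + (10 - b))) / 2"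
    by (metis add_divide_distrib of_int_add)
  then have expo: "q powr (real_of_int ((-1 - j) * (5 * (-1 - j) + b)) / 2)
      = q powr (real_of_int (5 - b) / 2) * q powr (real_of_int (j * (5 * j + (10 - b))) / 2)"
    by (simp only: powr_add)
  have binom: "qbinom q (M + N) (N - 2 * (-1 - j)) = qbinom q (N + 2 + (M - 2)) (M - 2 - 2 * j)"
    by (subst qbinom_sym) (simp add: algebra_simps)
  show "bosonic_term q b N M (-1 - j)
      = - (q powr (real_of_int (5 - b) / 2)) * bosonic_term q (10 - b) (M - 2) (N + 2) j"
    unfolding bosonic_term_def sign expo binom by (simp add: mult_ac)
qed (auto simp: bosonic_support_def)

lemma bosonic_5_eq_0: "bosonic q 5 N (N + 2) = 0"
  using bosonic_shift[of q 5 N "N + 2"] by (cases "q = 0") auto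

definition fermionic_term :: "real \<Rightarrow> nat \<Rightarrow> nat \<Rightarrow> nat \<Rightarrow> real" where
  "fermionic_term q a L n = q ^ (n * n + a * n) * qbinom q (int L) (int n)"

definition fermionic :: "real \<Rightarrow> nat \<Rightarrow> nat \<Rightarrow> real" where
  "fermionic q a L = (\<Sum>n\<le>L. fermionic_term q a L n)"

context
  fixes q :: real
  assumes q_pos: "0 < q" and q_less_1: "q < 1"
begin

lemma qbinom_0_right: "0 \<le> n \<Longrightarrow> qbinom q n 0 = 1"
  using qfac_pos[OF q_pos q_less_1, of "nat n"] by (simp add: qbinom_def)

lemma qbinom_diag: "0 \<le> n \<Longrightarrow> qbinom q n n = 1"
  using qfac_pos[OF q_pos q_less_1, of "nat n"] by (simp add: qbinom_def)

lemma qbinom_pascal_of_nat: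
  "qbinom q (int (Suc a + Suc b)) (int (Suc a))
     = qbinom q (int (a + Suc b)) (int a) + q ^ Suc a * qbinom q (int (Suc a + b)) (int (Suc a))"
proof -
  define x y X where "x = q ^ Suc a" and "y = q ^ Suc b" and "X = qfac q (Suc (a + b))"
  have nonzero: "qfac q a \<noteq> 0" "qfac q b \<noteq> 0" "1 - x \<noteq> 0" "1 - y \<noteq> 0"
    using qfac_pos[OF q_pos q_less_1, of a] qfac_pos[OF q_pos q_less_1, of b]
      power_Suc_less_one[OF q_pos q_less_1, of a]
      power_Suc_less_one[OF q_pos q_less_1, of b]
    by (auto simp: x_def y_def simp del: power_Suc)
  have num: "qfac q (Suc a + Suc b) = X * (1 - x * y)"
    by (simp add: X_def x_def y_def qfac_Suc power_add[symmetric])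
  have mid: "qfac q (a + Suc b) = X" "qfac q (Suc a + b) = X"
    by (simp_all add: X_def)
  have den: "qfac q (Suc a) = qfac q a * (1 - x)" "qfac q (Suc b) = qfac q b * (1 - y)"
    by (simp_all add: x_def y_def qfac_Suc)
  have "X * (1 - x * y) / (qfac q a * (1 - x) * (qfac q b * (1 - y)))
      = X / (qfac q a * (qfac q b * (1 - y))) + x * (X / (qfac q a * (1 - x) * qfac q b))"
    using nonzero by (simp add: divide_simps) (simp add: algebra_simps)
  then show ?thesis
    unfolding qbinom_of_nat num mid den x_def[symmetric] .
qed

lemma qbinom_pascal:
  assumes "1 \<le> n"
  shows "qbinom q n k = qbinom q (n - 1) (k - 1) + q powr k * qbinom q (n - 1) k"
proof -
  consider "k < 0 \<or> n < k" | "k = 0" | "k = n" | "0 < k \<and> k < n"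
    by linarith
  then show ?thesis
  proof cases
    case 1
    then show ?thesis by (auto simp: qbinom_eq_0)
  next
    case 2
    then show ?thesis using assms q_pos by (simp add: qbinom_0_right qbinom_eq_0)
  next
    case 3
    then show ?thesis using assms by (simp add: qbinom_diag qbinom_eq_0)
  next
    case 4
    define a b where "a = nat (k - 1)" and "b = nat (n - k - 1)"
    have k: "k = int (Suc a)" and n: "n = int (Suc a + Suc b)"
      using 4 by (simp_all add: a_def b_def)
    have "q powr k = q ^ Suc a"
      by (simp only: k of_int_of_nat_eq powr_realpow[OF q_pos])
    moreover have "n - 1 = int (a + Suc b)" "k - 1 = int a" "n - 1 = int (Suc a + b)"
      using k n by simp_all
    ultimately show ?thesis
      using qbinom_pascal_of_nat[of a b] by (simp only: k n)
  qed
qed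

lemma qbinom_pascal':
  assumes "1 \<le> n"
  shows "qbinom q n k = qbinom q (n - 1) k + q powr (n - k) * qbinom q (n - 1) (k - 1)"
proof -
  have "qbinom q n k = qbinom q n (n - k)"
    by (rule qbinom_sym)
  also have "\<dots> = qbinom q (n - 1) (n - k - 1) + q powr (n - k) * qbinom q (n - 1) (n - k)"
    using assms by (rule qbinom_pascal)
  also have "qbinom q (n - 1) (n - k - 1) = qbinom q (n - 1) k"
    by (subst qbinom_sym) simp
  also have "qbinom q (n - 1) (n - k) = qbinom q (n - 1) (k - 1)"
    by (subst qbinom_sym) simp
  finally show ?thesis .
qed

lemma qbinom_Suc_Suc:
  "qbinom q (int (Suc L)) (int (Suc n))
     = qbinom q (int L) (int n) + q ^ Suc n * qbinom q (int L) (int (Suc n))"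
  using qbinom_pascal[of "int (Suc L)" "int (Suc n)"]
  by (simp only: of_int_of_nat_eq powr_realpow[OF q_pos]) simp

lemma qbinom_Suc_Suc':
  "qbinom q (int (Suc L)) (int (Suc n))
     = qbinom q (int L) (int (Suc n)) + q ^ (L - n) * qbinom q (int L) (int n)"
proof (cases "n \<le> L")
  case True
  then have "int (Suc L) - int (Suc n) = int (L - n)"
    by simp
  then show ?thesis
    using qbinom_pascal'[of "int (Suc L)" "int (Suc n)"]
    by (simp only: of_int_of_nat_eq powr_realpow[OF q_pos]) simp
qed (simp add: qbinom_eq_0)

lemma bosonic_term_pascal:
  assumes "1 \<le> M + N"
  shows "bosonic_term q b N M j
    = bosonic_term q b N (M - 1) j + q powr M * bosonic_term q (b + 4) (N - 1) M j"
proof -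
  have binom: "qbinom q (M + N) (N - 2 * j) = qbinom q (M - 1 + N) (N - 2 * j)
      + q powr (M + 2 * j) * qbinom q (M + (N - 1)) (N - 1 - 2 * j)"
    using qbinom_pascal'[OF assms, of "N - 2 * j"] by (simp add: algebra_simps)
  have "real_of_int (j * (5 * j + b)) / 2 + real_of_int (M + 2 * j)
      = real_of_int M + real_of_int (j * (5 * j + (b + 4))) / 2"
    by (simp add: field_simps)
  then have expo: "q powr (real_of_int (j * (5 * j + b)) / 2) * q powr (M + 2 * j)
      = q powr M * q powr (real_of_int (j * (5 * j + (b + 4))) / 2)"
    by (simp only: powr_add[symmetric])
  show ?thesis
    unfolding bosonic_term_def binom using expo by (simp add: algebra_simps)
qed

lemma bosonic_term_pascal':
  assumes "1 \<le> M + N"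
  shows "bosonic_term q b N M j
    = bosonic_term q b (N - 1) M j + q powr N * bosonic_term q (b - 4) N (M - 1) j"
proof -
  have binom: "qbinom q (M + N) (N - 2 * j) = qbinom q (M + (N - 1)) (N - 1 - 2 * j)
      + q powr (N - 2 * j) * qbinom q (M - 1 + N) (N - 2 * j)"
    using qbinom_pascal[OF assms, of "N - 2 * j"] by (simp add: algebra_simps)
  have "real_of_int (j * (5 * j + b)) / 2 + real_of_int (N - 2 * j)
      = real_of_int N + real_of_int (j * (5 * j + (b - 4))) / 2"
    by (simp add: field_simps)
  then have expo: "q powr (real_of_int (j * (5 * j + b)) / 2) * q powr (N - 2 * j)
      = q powr N * q powr (real_of_int (j * (5 * j + (b - 4))) / 2)"
    by (simp only: powr_add[symmetric])
  show ?thesis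
    unfolding bosonic_term_def binom using expo by (simp add: algebra_simps)
qed

lemma bosonic_pascal:
  assumes "1 \<le> M + N"
  shows "bosonic q b N M = bosonic q b N (M - 1) + q powr M * bosonic q (b + 4) (N - 1) M"
proof -
  let ?S = "bosonic_support N M"
  have "bosonic q b N M = (\<Sum>j\<in>?S. bosonic_term q b N (M - 1) j
      + q powr M * bosonic_term q (b + 4) (N - 1) M j)"
    unfolding bosonic_def using bosonic_term_pascal[OF assms] by simp
  also have "\<dots> = bosonic q b N (M - 1) + q powr M * bosonic q (b + 4) (N - 1) M"
    using bosonic_eq_sum_superset[OF bosonic_support_mono(1) finite_bosonic_support]
      bosonic_eq_sum_superset[OF bosonic_support_mono(2) finite_bosonic_support]
    by (simp add: sum.distrib sum_distrib_left)
  finally show ?thesis .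
qed

lemma bosonic_pascal':
  assumes "1 \<le> M + N"
  shows "bosonic q b N M = bosonic q b (N - 1) M + q powr N * bosonic q (b - 4) N (M - 1)"
proof -
  let ?S = "bosonic_support N M"
  have "bosonic q b N M = (\<Sum>j\<in>?S. bosonic_term q b (N - 1) M j
      + q powr N * bosonic_term q (b - 4) N (M - 1) j)"
    unfolding bosonic_def using bosonic_term_pascal'[OF assms] by simp
  also have "\<dots> = bosonic q b (N - 1) M + q powr N * bosonic q (b - 4) N (M - 1)"
    using bosonic_eq_sum_superset[OF bosonic_support_mono(1) finite_bosonic_support]
      bosonic_eq_sum_superset[OF bosonic_support_mono(2) finite_bosonic_support]
    by (simp add: sum.distrib sum_distrib_left)
  finally show ?thesis .
qed

lemma bosonic_1_Suc:
  "bosonic q 1 (int L + 1) (int L + 1)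
     = bosonic q 1 (int L) (int L) + q ^ Suc L * bosonic q 3 (int L) (int L + 1)"
proof -
  have power: "q powr (int L + 1) = q ^ Suc L"
    using powr_realpow[OF q_pos, of "Suc L"] by (simp add: add.commute)
  have "bosonic q 1 (int L + 1) (int L + 1)
      = bosonic q 1 (int L) (int L + 1) + q ^ Suc L * bosonic q (-3) (int L + 1) (int L)"
    using bosonic_pascal'[of "int L + 1" "int L + 1" 1] power by simp
  also have "bosonic q 1 (int L) (int L + 1) = bosonic q 1 (int L) (int L)"
    using bosonic_pascal[of "int L + 1" "int L" 1] bosonic_5_eq_0[of q "int L - 1"]
    by (simp add: add.commute)
  also have "bosonic q (-3) (int L + 1) (int L) = bosonic q 3 (int L) (int L + 1)"
    by (subst bosonic_swap) simp
  finally show ?thesis .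
qed

lemma bosonic_3_Suc:
  "bosonic q 3 (int L + 1) (int L + 2)
     = bosonic q 3 (int L) (int L + 1)
       + q ^ Suc L * (bosonic q 1 (int L + 1) (int L + 1) - bosonic q 3 (int L) (int L + 1))"
proof -
  have power: "q powr (int L + 1) = q ^ Suc L"
    using powr_realpow[OF q_pos, of "Suc L"] by (simp add: add.commute)
  have "real_of_int (int L + 2) + real_of_int (5 - 7) / 2 = real_of_int (int L + 1)"
    by simp
  then have shifted_power: "q powr (int L + 2) * q powr (real_of_int (5 - 7) / 2) = q ^ Suc L"
    by (simp only: powr_add[symmetric] power)
  have "bosonic q 3 (int L + 1) (int L + 2)
      = bosonic q 3 (int L) (int L + 2) + q ^ Suc L * bosonic q (-1) (int L + 1) (int L + 1)"
    using bosonic_pascal'[of "int L + 2" "int L + 1" 3] power by (simp add: add.commute)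
  also have "bosonic q (-1) (int L + 1) (int L + 1) = bosonic q 1 (int L + 1) (int L + 1)"
    by (subst bosonic_swap) simp
  finally have first_step: "bosonic q 3 (int L + 1) (int L + 2)
      = bosonic q 3 (int L) (int L + 2) + q ^ Suc L * bosonic q 1 (int L + 1) (int L + 1)" .
  have second_step: "bosonic q 3 (int L) (int L + 2)
      = bosonic q 3 (int L) (int L + 1) + q powr (int L + 2) * bosonic q 7 (int L - 1) (int L + 2)"
    using bosonic_pascal[of "int L + 2" "int L" 3] by (simp add: add.commute)
  have "(10 :: int) - 7 = 3" "int L + 2 - 2 = int L" "int L - 1 + 2 = int L + 1"
    by simp_all
  then have shift: "bosonic q 7 (int L - 1) (int L + 2)
      = - (q powr (real_of_int (5 - 7) / 2)) * bosonic q 3 (int L) (int L + 1)"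
    using bosonic_shift[of q 7 "int L - 1" "int L + 2"] by (simp only:)
  show ?thesis
    unfolding first_step second_step shift shifted_power[symmetric] by (simp add: algebra_simps)
qed

lemma fermionic_0 [simp]: "fermionic q a 0 = 1"
  by (simp add: fermionic_def fermionic_term_def qbinom_0_right)

lemma fermionic_term_0 [simp]: "fermionic_term q a L 0 = 1"
  by (simp add: fermionic_term_def qbinom_0_right)

lemma fermionic_shift: "fermionic q a L = 1 + (\<Sum>n\<le>L. fermionic_term q a L (Suc n))"
proof -
  have "fermionic q a L = (\<Sum>n\<le>Suc L. fermionic_term q a L n)"
    by (simp add: fermionic_def fermionic_term_def qbinom_eq_0)
  also have "\<dots> = 1 + (\<Sum>n\<le>L. fermionic_term q a L (Suc n))"
    by (subst sum.atMost_Suc_shift) simp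
  finally show ?thesis .
qed

lemma fermionic_Suc_shift:
  "fermionic q a (Suc L) = 1 + (\<Sum>n\<le>L. fermionic_term q a (Suc L) (Suc n))"
  unfolding fermionic_def by (subst sum.atMost_Suc_shift) simp

lemma fermionic_term_Suc_Suc:
  "fermionic_term q a (Suc L) (Suc n)
     = fermionic_term q a L (Suc n) + q ^ (L + 1 + a) * fermionic_term q (Suc a) L n"
proof (cases "n \<le> L")
  case True
  then have "L + 1 + a + (n * n + Suc a * n) = Suc n * Suc n + a * Suc n + (L - n)"
    by (simp add: algebra_simps)
  then show ?thesis
    by (simp only: fermionic_term_def qbinom_Suc_Suc' distrib_left mult.assoc[symmetric]
        power_add[symmetric])
qed (simp add: fermionic_term_def qbinom_eq_0)

lemma fermionic_term_Suc_Suc':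
  "fermionic_term q a (Suc L) (Suc n)
     = q ^ Suc a * fermionic_term q (Suc (Suc a)) L n + fermionic_term q (Suc a) L (Suc n)"
proof -
  have "Suc a + (n * n + Suc (Suc a) * n) = Suc n * Suc n + a * Suc n"
    "Suc n * Suc n + Suc a * Suc n = Suc n * Suc n + a * Suc n + Suc n"
    by (simp_all add: algebra_simps)
  then show ?thesis
    by (simp only: fermionic_term_def qbinom_Suc_Suc distrib_left mult.assoc[symmetric]
        power_add[symmetric])
qed

lemma fermionic_Suc:
  "fermionic q a (Suc L) = fermionic q a L + q ^ (L + 1 + a) * fermionic q (Suc a) L"
  unfolding fermionic_Suc_shift fermionic_term_Suc_Suc fermionic_shift[of a L]
  by (simp add: fermionic_def sum.distrib sum_distrib_left)

lemma fermionic_Suc':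
  "fermionic q a (Suc L) = fermionic q (Suc a) L + q ^ Suc a * fermionic q (Suc (Suc a)) L"
  unfolding fermionic_Suc_shift fermionic_term_Suc_Suc' fermionic_shift[of "Suc a" L]
  by (simp add: fermionic_def sum.distrib sum_distrib_left)

lemma fermionic_recurrences:
  "fermionic q 0 (Suc L) = fermionic q 0 L + q ^ Suc L * fermionic q 1 L"
  "fermionic q 1 (Suc L) = fermionic q 1 L + q ^ Suc L * (fermionic q 0 (Suc L) - fermionic q 1 L)"
proof -
  show "fermionic q 0 (Suc L) = fermionic q 0 L + q ^ Suc L * fermionic q 1 L"
    using fermionic_Suc[of 0 L] by simp
  have "fermionic q 1 (Suc L) = fermionic q 1 L + q ^ Suc L * (q * fermionic q 2 L)"
    using fermionic_Suc[of 1 L] by (simp add: numeral_2_eq_2 mult.assoc)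
  moreover have "fermionic q 0 (Suc L) = fermionic q 1 L + q * fermionic q 2 L"
    using fermionic_Suc'[of 0 L] by (simp add: numeral_2_eq_2)
  ultimately show "fermionic q 1 (Suc L)
      = fermionic q 1 L + q ^ Suc L * (fermionic q 0 (Suc L) - fermionic q 1 L)"
    by simp
qed

lemma fermionic_eq_bosonic:
  "fermionic q 0 L = bosonic q 1 (int L) (int L)
   \<and> fermionic q 1 L = bosonic q 3 (int L) (int L + 1)"
proof (induction L)
  case 0
  have "bosonic_support 0 0 = {0}" "bosonic_support 0 1 = {0}"
    by (auto simp: bosonic_support_def)
  then show ?case
    using q_pos by (simp add: bosonic_def bosonic_term_def qbinom_0_right)
next
  case (Suc L)
  have "int (Suc L) = int L + 1" "int L + 1 + 1 = int L + 2"
    by simp_all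
  then show ?case
    using Suc.IH fermionic_recurrences[of L] bosonic_1_Suc[of L] bosonic_3_Suc[of L]
    by (simp only:)
qed

end

theorem mainTheorem7:
  fixes q :: real and L :: nat
  assumes "0 < q" and "q < 1"
  shows "G q (int L + 1) (int L) (1/2) 2 2
           = (\<Sum>j \<in> {j::int. 0 \<le> int L - 2 * j \<and> int L - 2 * j \<le> 2 * int L + 1}.
                (-1) powi j * q powr (real_of_int (j * (5 * j + 3)) / 2)
                * qbinom q (2 * int L + 1) (int L - 2 * j))
       \<and> (\<Sum>j \<in> {j::int. 0 \<le> int L - 2 * j \<and> int L - 2 * j \<le> 2 * int L + 1}.
                (-1) powi j * q powr (real_of_int (j * (5 * j + 3)) / 2)
                * qbinom q (2 * int L + 1) (int L - 2 * j))
         = (\<Sum>n\<le>L. q ^ (n * (n + 1)) * qbinom q (int L) (int n))"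
proof -
  have "G q (int L + 1) (int L) (1/2) 2 2 = bosonic q (-3) (int L + 1) (int L)"
    using G_eq_bosonic[of q "int L + 1" "int L" "-3"] by simp
  also have "\<dots> = bosonic q 3 (int L) (int L + 1)"
    by (subst bosonic_swap) simp
  finally have G_eq: "G q (int L + 1) (int L) (1/2) 2 2 = bosonic q 3 (int L) (int L + 1)" .
  have "int L + 1 + int L = 2 * int L + 1"
    by simp
  then have bosonic_eq: "bosonic q 3 (int L) (int L + 1)
      = (\<Sum>j \<in> {j::int. 0 \<le> int L - 2 * j \<and> int L - 2 * j \<le> 2 * int L + 1}.
          (-1) powi j * q powr (real_of_int (j * (5 * j + 3)) / 2)
          * qbinom q (2 * int L + 1) (int L - 2 * j))"
    unfolding bosonic_def bosonic_support_def bosonic_term_def by (simp only:)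
  have "fermionic q 1 L = (\<Sum>n\<le>L. q ^ (n * (n + 1)) * qbinom q (int L) (int n))"
    by (simp add: fermionic_def fermionic_term_def algebra_simps)
  then show ?thesis
    using G_eq bosonic_eq fermionic_eq_bosonic[OF assms, of L] by simp
qed

end
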